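(* Let $p\in[2,\infty)$ and $q\in(1,2]$ with $\frac1p+\frac1q=1$. Let $\{(\mathbf{x}^{(i)},y^{(i)})\}_{i=1}^n$ with $\mathbf{x}^{(i)}\in\mathbb{R}^d$, $\|\mathbf{x}^{(i)}\|_p\le1$, $y^{(i)}\in\{-1,1\}$, $n\ge2$, and suppose there is $\mathbf{w}^*$ with $\|\mathbf{w}^*\|_q\le1$ and $\min_iy^{(i)}\mathbf{x}^{(i)\top}\mathbf{w}^*\ge\gamma>0$. Let $A$ have rows $y^{(i)}\mathbf{x}^{(i)\top}$, $g(\mathbf{w},\mathbf{p})=\mathbf{p}^{\top}A\mathbf{w}$, $\alpha_t=1$, $\eta^{\mathbf{w}}=\sqrt{\frac{1}{2(q-1)\log n}}$, $\eta^{\mathbf{p}}=1/\eta^{\mathbf{w}}$, $\mathbf{p}_0=\tfrac{\mathbf{1}}{n}$, and $h_j(\mathbf{w})=-g(\mathbf{w},\mathbf{p}_j)$, $\ell_j(\mathbf{p})=g(\mathbf{w}_j,\mathbf{p})$. For $t=1,\dots,T$ let $\mathbf{w}_t=\arg\min_{\mathbf{w}\in\mathbb{R}^d}\eta^{\mathbf{w}}\big[\sum_{j=1}^{t-1}h_j(\mathbf{w})+h_{t-1}(\mathbf{w})\big]+\frac{1}{2(q-1)}\|\mathbf{w}\|_q^2$, and then $\mathbf{p}_t=\arg\min_{\mathbf{p}\in\Delta^n}\eta^{\mathbf{p}}\sum_{s=1}^t\ell_s(\mathbf{p})+D_E(\mathbf{p},\tfrac{\mathbf{1}}{n})$. Let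 $\overline{\mathbf{w}}_T=\frac1T\sum_{s=1}^T\mathbf{w}_s$. Then there is a universal constant $C>0$ such that whenever $T\ge C\sqrt{2(p-1)\log n}/\gamma$, $\overline{\mathbf{w}}_T$ has non-negative margin, i.e. $\min_iy^{(i)}\mathbf{x}^{(i)\top}\overline{\mathbf{w}}_T\ge0$.
   Context: $\Delta^n$ is the probability simplex; $\mathbf{1}$ the all-ones vector; $D_E(\mathbf{p},\mathbf{q})=\sum_ip_i\log(p_i/q_i)$ (KL divergence). (The Bregman divergence of $\frac{1}{2(q-1)}\|\cdot\|_q^2$ from $\mathbf{0}$ equals $\frac{1}{2(q-1)}\|\mathbf{w}\|_q^2$.) *)

theory Defs
  imports Complex_Main
begin

text \<open>Vectors in R^m are represented as functions nat => real supported on {..<m}.\<close>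

definition vecs :: "nat \<Rightarrow> (nat \<Rightarrow> real) set" where
  "vecs m = {v. \<forall>i\<ge>m. v i = 0}"

definition lpnorm :: "real \<Rightarrow> nat \<Rightarrow> (nat \<Rightarrow> real) \<Rightarrow> real" where
  "lpnorm r m v = (\<Sum>i<m. \<bar>v i\<bar> powr r) powr (1 / r)"

definition simplex :: "nat \<Rightarrow> (nat \<Rightarrow> real) set" where
  "simplex n = {v. (\<forall>i<n. 0 \<le> v i) \<and> (\<Sum>i<n. v i) = 1 \<and> (\<forall>i\<ge>n. v i = 0)}"

text \<open>KL divergence; the convention 0 log 0 = 0 holds since 0 * ln _ = 0.\<close>
definition KL :: "nat \<Rightarrow> (nat \<Rightarrow> real) \<Rightarrow> (nat \<Rightarrow> real) \<Rightarrow> real" where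
  "KL n a b = (\<Sum>i<n. a i * ln (a i / b i))"

definition Aw :: "nat \<Rightarrow> (nat \<Rightarrow> nat \<Rightarrow> real) \<Rightarrow> (nat \<Rightarrow> real) \<Rightarrow> (nat \<Rightarrow> real) \<Rightarrow> nat \<Rightarrow> real" where
  "Aw d x y w i = y i * (\<Sum>k<d. x i k * w k)"

definition gval :: "nat \<Rightarrow> nat \<Rightarrow> (nat \<Rightarrow> nat \<Rightarrow> real) \<Rightarrow> (nat \<Rightarrow> real) \<Rightarrow> (nat \<Rightarrow> real) \<Rightarrow> (nat \<Rightarrow> real) \<Rightarrow> real" where
  "gval d n x y w pv = (\<Sum>i<n. pv i * Aw d x y w i)"

end

theory Submission
  imports Defs "HOL-Analysis.Convex"
begin

text \<open>Both players run follow-the-regularised-leader.  The \<open>w\<close>-player uses the regulariser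
  \<open>\<parallel>w\<parallel>\<^sub>q\<^sup>2 / (2(q - 1))\<close> optimistically, i.e. with the last gain counted twice; its convex conjugate
  \<open>\<eta> \<parallel>\<theta>\<parallel>\<^sub>p\<^sup>2 / (2(p - 1))\<close> is \<open>\<eta>\<close>-smooth w.r.t. \<open>\<parallel>\<cdot>\<parallel>\<^sub>p\<close> for \<open>p \<ge> 2\<close>, so its regret against any \<open>u\<close>
  is at most \<open>\<parallel>u\<parallel>\<^sub>q\<^sup>2 / (2(q - 1)\<eta>) + \<eta>/2 \<Sum>\<^sub>t \<parallel>A\<^sup>T(p\<^sub>t - p\<^sub>t\<^sub>-\<^sub>1)\<parallel>\<^sub>p\<^sup>2\<close>, and
  \<open>\<parallel>A\<^sup>T r\<parallel>\<^sub>p \<le> \<parallel>r\<parallel>\<^sub>1\<close>.  The \<open>p\<close>-player uses \<open>KL(\<cdot>, 1/n) / \<eta>\<close>, which is strongly convex w.r.t.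
  \<open>\<parallel>\<cdot>\<parallel>\<^sub>1\<close> by Pinsker's inequality; this gives it a stability bonus \<open>\<eta>/2 \<Sum>\<^sub>t \<parallel>p\<^sub>t - p\<^sub>t\<^sub>-\<^sub>1\<parallel>\<^sub>1\<^sup>2\<close>
  that exactly pays for the \<open>w\<close>-player's penalty, while its loss against the vertex \<open>e\<^sub>i\<close> is
  \<open>\<eta> ln n\<close>.  Adding up, \<open>\<Sum>\<^sub>t g(u, p\<^sub>t) - \<parallel>u\<parallel>\<^sub>q\<^sup>2 / (2(q - 1)\<eta>) \<le> \<Sum>\<^sub>t (A w\<^sub>t)\<^sub>i + \<eta> ln n\<close>.
  With \<open>u = (q - 1) \<eta> T \<gamma> w\<^sup>*\<close> the left side is at least \<open>(q - 1) \<eta> T\<^sup>2 \<gamma>\<^sup>2 / 2\<close>, so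
  \<open>\<Sum>\<^sub>t (A w\<^sub>t)\<^sub>i \<ge> 0\<close> once \<open>T \<gamma> \<ge> \<surd>(2 (p - 1) ln n)\<close>: the constant \<open>C = 1\<close> works, and for every step
  size \<open>\<eta> > 0\<close>, not only the one of the statement.\<close>

section \<open>Hoelder's inequality and \<open>\<ell>\<^sub>p\<close> norms\<close>

lemma conjugate_exponents:
  fixes p q :: real
  assumes "p > 1" and "1/p + 1/q = 1"
  shows "q > 1" and "(p - 1) * (q - 1) = 1" and "(p - 1) * q = p"
proof -
  have "q \<noteq> 0" using assms by auto
  then have q: "q = p / (p - 1)"
    using assms by (auto simp: field_simps)
  then show "(p - 1) * (q - 1) = 1" "(p - 1) * q = p"
    using assms(1) by (auto simp: field_simps)
  show "q > 1" unfolding q using assms(1) by (simp add: less_divide_eq)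
qed

lemma Holder_inequality_sum:
  fixes a b :: "'i \<Rightarrow> real"
  assumes fin: "finite I" and p: "p > 1" and pq: "1/p + 1/q = 1"
    and a: "\<And>i. a i \<ge> 0" and b: "\<And>i. b i \<ge> 0"
  shows "(\<Sum>i\<in>I. a i * b i) \<le> (\<Sum>i\<in>I. a i powr p) powr (1/p) * (\<Sum>i\<in>I. b i powr q) powr (1/q)"
proof -
  have q: "q > 1" using conjugate_exponents[OF p pq] by simp
  define A where "A = (\<Sum>i\<in>I. a i powr p)"
  define B where "B = (\<Sum>i\<in>I. b i powr q)"
  have "A \<ge> 0" "B \<ge> 0" unfolding A_def B_def by (auto intro: sum_nonneg)
  show ?thesis
  proof (cases "A = 0 \<or> B = 0")
    case True
    then have "\<forall>i\<in>I. a i * b i = 0"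
      using fin a b p q by (auto simp: A_def B_def sum_nonneg_eq_0_iff)
    then have "(\<Sum>i\<in>I. a i * b i) = 0" by (intro sum.neutral) auto
    then show ?thesis by simp
  next
    case False
    with \<open>A \<ge> 0\<close> \<open>B \<ge> 0\<close> have A: "A > 0" and B: "B > 0" by auto
    have Young: "a i / A powr (1/p) * (b i / B powr (1/q)) \<le> a i powr p / (p * A) + b i powr q / (q * B)"
      for i
    proof -
      have "a i / A powr (1/p) * (b i / B powr (1/q))
          \<le> (a i / A powr (1/p)) powr p / p + (b i / B powr (1/q)) powr q / q"
        by (rule Youngs_inequality[OF p q pq]) (use a b in auto)
      also have "\<dots> = a i powr p / (p * A) + b i powr q / (q * B)"
        using a b A B p q by (simp add: powr_divide powr_powr mult.commute)
      finally show ?thesis .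
    qed
    have "(\<Sum>i\<in>I. a i * b i) / (A powr (1/p) * B powr (1/q))
        = (\<Sum>i\<in>I. a i / A powr (1/p) * (b i / B powr (1/q)))"
      by (simp add: sum_divide_distrib)
    also have "\<dots> \<le> (\<Sum>i\<in>I. a i powr p / (p * A) + b i powr q / (q * B))"
      by (rule sum_mono) (rule Young)
    also have "\<dots> = 1"
      using A B pq by (simp add: sum.distrib A_def B_def flip: sum_divide_distrib)
    finally show ?thesis
      using A B by (simp add: A_def B_def divide_le_eq)
  qed
qed

lemma lpnorm_nonneg: "lpnorm r m v \<ge> 0"
  by (simp add: lpnorm_def)

lemma lpnorm_powr: "r > 0 \<Longrightarrow> lpnorm r m v powr r = (\<Sum>i<m. \<bar>v i\<bar> powr r)"
  by (simp add: lpnorm_def powr_powr sum_nonneg)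

lemma lpnorm_power2: "(lpnorm r m v)\<^sup>2 = (\<Sum>i<m. \<bar>v i\<bar> powr r) powr (2/r)"
  by (simp add: lpnorm_def power2_eq_square flip: powr_add)

lemma lpnorm_cong: "(\<And>k. k < m \<Longrightarrow> v k = w k) \<Longrightarrow> lpnorm r m v = lpnorm r m w"
  unfolding lpnorm_def by (metis (mono_tags, lifting) lessThan_iff sum.cong)

lemma lpnorm_cmult:
  assumes "r > 0"
  shows "lpnorm r m (\<lambda>k. c * v k) = \<bar>c\<bar> * lpnorm r m v"
proof -
  have "(\<Sum>i<m. \<bar>c * v i\<bar> powr r) = \<bar>c\<bar> powr r * (\<Sum>i<m. \<bar>v i\<bar> powr r)"
    by (simp add: abs_mult powr_mult sum_distrib_left)
  then show ?thesis
    using assms by (simp add: lpnorm_def powr_mult powr_powr sum_nonneg)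
qed

definition dot :: "nat \<Rightarrow> (nat \<Rightarrow> real) \<Rightarrow> (nat \<Rightarrow> real) \<Rightarrow> real" where
  "dot m a b = (\<Sum>k<m. a k * b k)"

lemma dot_add_left: "dot m (\<lambda>k. a k + b k) w = dot m a w + dot m b w"
  by (simp add: dot_def sum.distrib algebra_simps)

lemma dot_diff_left: "dot m (\<lambda>k. a k - b k) w = dot m a w - dot m b w"
  by (simp add: dot_def sum_subtractf algebra_simps)

lemma dot_sum_left: "dot m (\<lambda>k. \<Sum>j\<in>A. f j k) w = (\<Sum>j\<in>A. dot m (f j) w)"
  by (simp add: dot_def sum_distrib_right sum.swap[of _ A])

lemma dot_cmult_right: "dot m a (\<lambda>k. c * w k) = c * dot m a w"
  by (simp add: dot_def sum_distrib_left algebra_simps)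

lemma dot_sum_right: "dot m a (\<lambda>k. \<Sum>j\<in>A. f j k) = (\<Sum>j\<in>A. dot m a (f j))"
  by (simp add: dot_def sum_distrib_left sum.swap[of _ A])

lemma abs_dot_le_lpnorm:
  assumes "p > 1" and "1/p + 1/q = 1"
  shows "\<bar>dot m a b\<bar> \<le> lpnorm p m a * lpnorm q m b"
proof -
  have "\<bar>dot m a b\<bar> \<le> (\<Sum>k<m. \<bar>a k\<bar> * \<bar>b k\<bar>)"
    unfolding dot_def by (rule order_trans[OF sum_abs]) (simp add: abs_mult)
  also have "\<dots> \<le> lpnorm p m a * lpnorm q m b"
    unfolding lpnorm_def by (rule Holder_inequality_sum[OF _ assms]) auto
  finally show ?thesis .
qed

text \<open>The witness is \<open>sgn \<theta> |\<theta>|\<^sup>p\<^sup>-\<^sup>1 / \<parallel>\<theta>\<parallel>\<^sub>p\<^sup>p\<^sup>-\<^sup>1\<close>.\<close>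
lemma lpnorm_dual_witness:
  assumes p: "p > 1" and pq: "1/p + 1/q = 1"
  obtains v where "v \<in> vecs m" "lpnorm q m v \<le> 1" "dot m \<theta> v = lpnorm p m \<theta>"
proof (cases "lpnorm p m \<theta> = 0")
  case True
  then show ?thesis
    by (intro that[of "\<lambda>k. 0"]) (simp_all add: vecs_def dot_def lpnorm_def)
next
  case False
  define N where "N = lpnorm p m \<theta>"
  have N: "N > 0" using False lpnorm_nonneg[of p m \<theta>] by (simp add: N_def)
  have pq1: "(p - 1) * q = p" using conjugate_exponents[OF p pq] by simp
  have NS: "N powr p = (\<Sum>k<m. \<bar>\<theta> k\<bar> powr p)" unfolding N_def using p by (simp add: lpnorm_powr)
  define v where "v k = (if k < m then sgn (\<theta> k) * \<bar>\<theta> k\<bar> powr (p - 1) / N powr (p - 1) else 0)" for k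
  have "\<theta> k * (sgn (\<theta> k) * \<bar>\<theta> k\<bar> powr (p - 1)) = \<bar>\<theta> k\<bar> powr p" for k
  proof -
    have "\<bar>\<theta> k\<bar> * \<bar>\<theta> k\<bar> powr (p - 1) = \<bar>\<theta> k\<bar> powr p"
      using p by (cases "\<theta> k = 0") (auto simp: powr_diff)
    then show ?thesis by (simp add: abs_sgn mult.assoc[symmetric] mult.commute[of _ "sgn _"])
  qed
  then have "dot m \<theta> v = N powr p / N powr (p - 1)"
    by (simp add: dot_def v_def NS sum_divide_distrib)
  also have "\<dots> = N" using N by (simp add: powr_diff)
  finally have dot_v: "dot m \<theta> v = lpnorm p m \<theta>" by (simp add: N_def)
  have "\<bar>v k\<bar> powr q = \<bar>\<theta> k\<bar> powr p / N powr p" if "k < m" for k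
  proof -
    have "\<bar>v k\<bar> = \<bar>\<theta> k\<bar> powr (p - 1) / N powr (p - 1)"
      using that by (cases "\<theta> k = 0") (auto simp: v_def abs_mult abs_sgn_eq)
    then show ?thesis by (simp add: powr_divide powr_powr pq1)
  qed
  then have "(\<Sum>k<m. \<bar>v k\<bar> powr q) = 1"
    using N by (simp add: sum_divide_distrib[symmetric] flip: NS)
  then have "lpnorm q m v = 1" by (simp add: lpnorm_def)
  then show ?thesis using dot_v by (intro that) (simp_all add: vecs_def v_def)
qed

section \<open>Smoothness of the squared \<open>\<ell>\<^sub>p\<close> norm\<close>

lemma DERIV_abs_powr:
  fixes p :: real
  assumes p: "p > 1"
  shows "DERIV (\<lambda>u. \<bar>u\<bar> powr p) u :> p * (sgn u * \<bar>u\<bar> powr (p - 1))"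
proof -
  consider "u > 0" | "u < 0" | "u = 0" by fastforce
  then show ?thesis
  proof cases
    case 1
    have "DERIV (\<lambda>u. u powr p) u :> p * (sgn u * \<bar>u\<bar> powr (p - 1))"
      using 1 has_real_derivative_powr[OF 1, of p] by simp
    then show ?thesis
      by (rule has_field_derivative_transform_within_open[where S="{0<..}"]) (use 1 in auto)
  next
    case 2
    have "DERIV (\<lambda>u. (-u) powr p) u :> p * (-u) powr (p - 1) * (-1)"
      using 2 by (auto intro!: derivative_eq_intros)
    then have "DERIV (\<lambda>u. (-u) powr p) u :> p * (sgn u * \<bar>u\<bar> powr (p - 1))"
      using 2 by simp
    then show ?thesis
      by (rule has_field_derivative_transform_within_open[where S="{..<0}"]) (use 2 in auto)
  next
    case 3
    have "((\<lambda>h. \<bar>h\<bar> powr (p - 1)) \<longlongrightarrow> 0) (at 0)"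
      using p by (intro tendsto_zero_powrI) (auto intro!: tendsto_eq_intros)
    moreover have "\<bar>(\<bar>h\<bar> powr p - \<bar>0\<bar> powr p) / h\<bar> = \<bar>h\<bar> powr (p - 1)" if "h \<noteq> 0" for h :: real
      using that by (simp add: powr_diff abs_divide)
    ultimately have "((\<lambda>h. (\<bar>0 + h\<bar> powr p - \<bar>0\<bar> powr p) / h) \<longlongrightarrow> 0) (at 0)"
      by (auto intro: tendsto_0_le[where K=1] simp: eventually_at_filter)
    then show ?thesis using 3 by (simp add: DERIV_def)
  qed
qed

text \<open>\<open>|u|\<^sup>p\<^sup>-\<^sup>2\<close>; the case \<open>p = 2\<close> is separate because \<open>0 powr 0 = 0\<close>.\<close>
definition abs_powr_minus2 :: "real \<Rightarrow> real \<Rightarrow> real" where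
  "abs_powr_minus2 p u = (if p = 2 then 1 else \<bar>u\<bar> powr (p - 2))"

lemma DERIV_sgn_mult_abs_powr:
  fixes p :: real
  assumes p: "p \<ge> 2"
  shows "DERIV (\<lambda>u. sgn u * \<bar>u\<bar> powr (p - 1)) u :> (p - 1) * abs_powr_minus2 p u"
proof -
  consider "u > 0" | "u < 0" | "u = 0" by fastforce
  then show ?thesis
  proof cases
    case 1
    have "DERIV (\<lambda>u. u powr (p - 1)) u :> (p - 1) * abs_powr_minus2 p u"
      using 1 has_real_derivative_powr[OF 1, of "p - 1"] by (auto simp: abs_powr_minus2_def)
    then show ?thesis
      by (rule has_field_derivative_transform_within_open[where S="{0<..}"]) (use 1 in auto)
  next
    case 2
    have "DERIV (\<lambda>u. - ((-u) powr (p - 1))) u :> - ((p - 1) * (-u) powr (p - 1 - 1) * (-1))"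
      using 2 by (auto intro!: derivative_eq_intros)
    then have "DERIV (\<lambda>u. - ((-u) powr (p - 1))) u :> (p - 1) * abs_powr_minus2 p u"
      using 2 by (auto simp: abs_powr_minus2_def)
    then show ?thesis
      by (rule has_field_derivative_transform_within_open[where S="{..<0}"]) (use 2 in auto)
  next
    case 3
    have quotient: "sgn h * \<bar>h\<bar> powr (p - 1) / h = \<bar>h\<bar> powr (p - 2)" if "h \<noteq> 0" for h :: real
    proof -
      have "\<bar>h\<bar> powr (p - 1) = \<bar>h\<bar> powr (p - 2) * \<bar>h\<bar>"
        using that powr_add[of "\<bar>h\<bar>" "p - 2" 1] by simp
      then show ?thesis using that by (cases "h > 0") (auto simp: field_simps)
    qed
    have "((\<lambda>h. \<bar>h\<bar> powr (p - 2)) \<longlongrightarrow> (p - 1) * abs_powr_minus2 p 0) (at 0)"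
    proof (cases "p = 2")
      case True
      then show ?thesis
        by (simp add: abs_powr_minus2_def tendsto_cong[where g="\<lambda>_. 1"] eventually_at_filter)
    next
      case False
      then show ?thesis
        using p by (simp add: abs_powr_minus2_def)
          (intro tendsto_zero_powrI, auto intro!: tendsto_eq_intros)
    qed
    then have "((\<lambda>h. sgn h * \<bar>h\<bar> powr (p - 1) / h) \<longlongrightarrow> (p - 1) * abs_powr_minus2 p 0) (at 0)"
      by (rule tendsto_cong[THEN iffD1, rotated]) (auto simp: quotient eventually_at_filter)
    then show ?thesis using 3 by (simp add: DERIV_def)
  qed
qed

lemma abs_powr_two: "\<bar>x::real\<bar> powr 2 = x\<^sup>2"
  by (cases "x = 0") (simp_all add: powr_realpow[of "\<bar>x\<bar>" 2, simplified])

text \<open>Hoelder's inequality with exponents \<open>p/(p - 2)\<close> and \<open>p/2\<close>.\<close>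
lemma weighted_sum_sq_le_lpnorm_sq:
  assumes p: "p \<ge> 2" and M: "(\<Sum>k<m. \<bar>u k\<bar> powr p) > 0"
  shows "(\<Sum>k<m. \<bar>u k\<bar> powr p) powr (2/p - 1) * (\<Sum>k<m. abs_powr_minus2 p (u k) * (w k)\<^sup>2)
         \<le> (lpnorm p m w)\<^sup>2"
proof (cases "p = 2")
  case True
  then show ?thesis using M by (simp add: abs_powr_minus2_def lpnorm_power2 abs_powr_two)
next
  case False
  with p have p2: "p > 2" by simp
  define M where "M = (\<Sum>k<m. \<bar>u k\<bar> powr p)"
  have "(\<Sum>k<m. abs_powr_minus2 p (u k) * (w k)\<^sup>2) = (\<Sum>k<m. \<bar>u k\<bar> powr (p - 2) * \<bar>w k\<bar> powr 2)"
    using False by (simp add: abs_powr_minus2_def abs_powr_two)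
  also have "\<dots> \<le> (\<Sum>k<m. (\<bar>u k\<bar> powr (p - 2)) powr (p / (p - 2))) powr (1 / (p / (p - 2)))
                  * (\<Sum>k<m. (\<bar>w k\<bar> powr 2) powr (p / 2)) powr (1 / (p / 2))"
    using p2 by (intro Holder_inequality_sum) (auto simp: less_divide_eq field_simps)
  also have "\<dots> = M powr ((p - 2) / p) * (lpnorm p m w)\<^sup>2"
  proof -
    have "(\<bar>w k\<bar> powr 2) powr (p / 2) = \<bar>w k\<bar> powr p" for k
      by (simp only: powr_powr) simp
    then show ?thesis using p2 by (simp add: powr_powr M_def lpnorm_power2)
  qed
  finally have "M powr (2/p - 1) * (\<Sum>k<m. abs_powr_minus2 p (u k) * (w k)\<^sup>2)
      \<le> M powr (2/p - 1) * (M powr ((p - 2) / p) * (lpnorm p m w)\<^sup>2)"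
    by (rule mult_left_mono) simp
  also have "\<dots> = M powr (2/p - 1 + (p - 2) / p) * (lpnorm p m w)\<^sup>2"
    by (simp add: powr_add)
  also have "2/p - 1 + (p - 2) / p = 0" using p2 by (simp add: field_simps)
  finally show ?thesis using M by (simp add: M_def)
qed

lemma DERIV_eq_slope_of_supporting_line:
  fixes f :: "real \<Rightarrow> real"
  assumes "\<And>s. f s \<ge> f 0 + s * c" and "DERIV f 0 :> D"
  shows "D = c"
proof -
  have "DERIV (\<lambda>s. f s - f 0 - s * c) 0 :> D - 0 - c"
    using assms(2) by (auto intro!: derivative_eq_intros)
  then have "D - 0 - c = 0"
    by (rule DERIV_local_min[where d=1]) (use assms(1) in \<open>auto simp: algebra_simps\<close>)
  then show ?thesis by simp
qed

lemma second_derivative_upper_bound: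
  fixes f :: "real \<Rightarrow> real"
  assumes "\<And>s. DERIV f s :> f' s" and "\<And>s. DERIV f' s :> f'' s" and "\<And>s. f'' s \<le> K"
    and "h > 0"
  shows "f h \<le> f 0 + f' 0 * h + K / 2 * h\<^sup>2"
proof -
  define df where "df m = (if m = 0 then f else if m = 1 then f' else f'')" for m :: nat
  have "\<exists>t>0. t < h \<and> f h = (\<Sum>m<2. df m 0 / fact m * h ^ m) + df 2 t / fact 2 * h ^ 2"
    by (rule Maclaurin[OF \<open>h > 0\<close>]) (auto simp: df_def less_2_cases_iff assms(1,2))
  then obtain t where "f h = (\<Sum>m<2. df m 0 / fact m * h ^ m) + df 2 t / fact 2 * h ^ 2"
    by blast
  also have "\<dots> = f 0 + f' 0 * h + f'' t / 2 * h\<^sup>2"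
    by (simp add: df_def eval_nat_numeral)
  also have "\<dots> \<le> f 0 + f' 0 * h + K / 2 * h\<^sup>2"
    using assms(3)[of t] by (simp add: mult_right_mono divide_right_mono)
  finally show ?thesis .
qed

lemma lpnorm_sq_line_second_derivative_nonvanishing:
  assumes p: "p \<ge> 2" and M_pos: "\<And>s. (\<Sum>k<m. \<bar>\<theta> k + s * \<delta> k\<bar> powr p) > 0"
  obtains f' f'' where "\<And>s. DERIV (\<lambda>s. (lpnorm p m (\<lambda>k. \<theta> k + s * \<delta> k))\<^sup>2) s :> f' s"
    and "\<And>s. DERIV f' s :> f'' s" and "\<And>s. f'' s \<le> 2 * (p - 1) * (lpnorm p m \<delta>)\<^sup>2"
proof -
  have p1: "p > 1" using p by simp
  define M where "M s = (\<Sum>k<m. \<bar>\<theta> k + s * \<delta> k\<bar> powr p)" for s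
  define M' where "M' s = (\<Sum>k<m. p * (sgn (\<theta> k + s * \<delta> k) * \<bar>\<theta> k + s * \<delta> k\<bar> powr (p - 1)) * \<delta> k)"
    for s
  define M'' where "M'' s = (\<Sum>k<m. p * ((p - 1) * abs_powr_minus2 p (\<theta> k + s * \<delta> k) * \<delta> k) * \<delta> k)"
    for s
  have M: "M s > 0" for s using M_pos by (simp add: M_def)
  have line: "DERIV (\<lambda>s. \<theta> k + s * \<delta> k) s :> \<delta> k" for k s
    by (auto intro!: derivative_eq_intros)
  have dM: "DERIV M s :> M' s" for s
    unfolding M_def M'_def by (rule DERIV_sum, rule DERIV_chain2[OF DERIV_abs_powr[OF p1] line])
  have dM': "DERIV M' s :> M'' s" for s
    unfolding M'_def M''_def
    by (rule DERIV_sum, rule DERIV_cmult_right, rule DERIV_cmult,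
        rule DERIV_chain2[OF DERIV_sgn_mult_abs_powr[OF p] line])
  define f' where "f' s = 2/p * (M s powr (2/p - 1) * M' s)" for s
  define f'' where "f'' s = 2/p * ((2/p - 1) * M s powr (2/p - 1 - 1) * M' s * M' s + M'' s * M s powr (2/p - 1))"
    for s
  show ?thesis
  proof
    have "DERIV (\<lambda>s. M s powr (2/p)) s :> f' s" for s
      using DERIV_fun_powr[OF dM M, of "2/p"] by (simp add: f'_def mult.assoc)
    then show "DERIV (\<lambda>s. (lpnorm p m (\<lambda>k. \<theta> k + s * \<delta> k))\<^sup>2) s :> f' s" for s
      by (simp add: lpnorm_power2 M_def)
    show "DERIV f' s :> f'' s" for s
      unfolding f'_def f''_def
      using DERIV_fun_powr[OF dM M, of "2/p - 1"] by (intro DERIV_cmult DERIV_mult dM') simp_all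
    show "f'' s \<le> 2 * (p - 1) * (lpnorm p m \<delta>)\<^sup>2" for s
    proof -
      have "2/p - 1 \<le> 0" using p by (simp add: divide_le_eq)
      then have concave_part: "(2/p - 1) * M s powr (2/p - 1 - 1) * M' s * M' s \<le> 0"
        by (simp add: mult_nonpos_nonneg mult.assoc)
      have "M'' s * M s powr (2/p - 1)
          = p * (p - 1) * (M s powr (2/p - 1) * (\<Sum>k<m. abs_powr_minus2 p (\<theta> k + s * \<delta> k) * (\<delta> k)\<^sup>2))"
        by (simp add: M''_def sum_distrib_left power2_eq_square algebra_simps)
      also have "\<dots> \<le> p * (p - 1) * (lpnorm p m \<delta>)\<^sup>2"
        using p M[of s] weighted_sum_sq_le_lpnorm_sq[OF p, where u="\<lambda>k. \<theta> k + s * \<delta> k" and w=\<delta> and m=m]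
        by (intro mult_left_mono) (simp_all add: M_def)
      finally have "f'' s \<le> 2/p * (0 + p * (p - 1) * (lpnorm p m \<delta>)\<^sup>2)"
        unfolding f''_def using concave_part p by (intro mult_left_mono add_mono) auto
      then show ?thesis using p by (simp add: algebra_simps)
    qed
  qed
qed

lemma lpnorm_sq_line_second_derivative:
  assumes p: "p \<ge> 2"
  obtains f' f'' where "\<And>s. DERIV (\<lambda>s. (lpnorm p m (\<lambda>k. \<theta> k + s * \<delta> k))\<^sup>2) s :> f' s"
    and "\<And>s. DERIV f' s :> f'' s" and "\<And>s. f'' s \<le> 2 * (p - 1) * (lpnorm p m \<delta>)\<^sup>2"
proof (cases "\<exists>s\<^sub>0. (\<Sum>k<m. \<bar>\<theta> k + s\<^sub>0 * \<delta> k\<bar> powr p) = 0")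
  case False
  then have "(\<Sum>k<m. \<bar>\<theta> k + s * \<delta> k\<bar> powr p) > 0" for s
    by (metis (no_types, lifting) order_less_le powr_ge_zero sum_nonneg)
  then show ?thesis using that by (rule lpnorm_sq_line_second_derivative_nonvanishing[OF p])
next
  case True
  text \<open>The line passes through the origin, where the norm is not differentiable, but the
    squared norm restricted to it is a quadratic polynomial.\<close>
  then obtain s\<^sub>0 where "(\<Sum>k<m. \<bar>\<theta> k + s\<^sub>0 * \<delta> k\<bar> powr p) = 0" by blast
  then have "\<theta> k + s\<^sub>0 * \<delta> k = 0" if "k < m" for k
    using that p by (simp add: sum_nonneg_eq_0_iff)
  then have "lpnorm p m (\<lambda>k. \<theta> k + s * \<delta> k) = lpnorm p m (\<lambda>k. (s - s\<^sub>0) * \<delta> k)" for s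
    by (intro lpnorm_cong) (simp add: algebra_simps eq_neg_iff_add_eq_0[symmetric])
  then have quadratic: "(lpnorm p m (\<lambda>k. \<theta> k + s * \<delta> k))\<^sup>2 = (lpnorm p m \<delta>)\<^sup>2 * (s - s\<^sub>0)\<^sup>2" for s
    using p by (simp add: lpnorm_cmult power_mult_distrib)
  show ?thesis
  proof (rule that)
    show "DERIV (\<lambda>s. (lpnorm p m (\<lambda>k. \<theta> k + s * \<delta> k))\<^sup>2) s :> (lpnorm p m \<delta>)\<^sup>2 * (2 * (s - s\<^sub>0))" for s
      unfolding quadratic by (auto intro!: derivative_eq_intros)
    show "DERIV (\<lambda>s. (lpnorm p m \<delta>)\<^sup>2 * (2 * (s - s\<^sub>0))) s :> (lpnorm p m \<delta>)\<^sup>2 * 2" for s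
      by (auto intro!: derivative_eq_intros)
    show "(lpnorm p m \<delta>)\<^sup>2 * 2 \<le> 2 * (p - 1) * (lpnorm p m \<delta>)\<^sup>2" for s :: real
      using p mult_right_mono[of 2 "2 * (p - 1)" "(lpnorm p m \<delta>)\<^sup>2"] by (simp add: mult.commute)
  qed
qed

text \<open>Taylor's theorem along the line through \<open>\<theta>\<close> in direction \<open>\<delta>\<close>; since the squared norm is
  differentiable, the subgradient \<open>g\<close> determines its first-order term.\<close>
lemma lpnorm_sq_smooth:
  assumes p: "p \<ge> 2"
    and subgradient: "\<And>z. (lpnorm p m z)\<^sup>2 \<ge> (lpnorm p m \<theta>)\<^sup>2 + dot m (\<lambda>k. z k - \<theta> k) g"
  shows "(lpnorm p m (\<lambda>k. \<theta> k + \<delta> k))\<^sup>2 \<le> (lpnorm p m \<theta>)\<^sup>2 + dot m \<delta> g + (p - 1) * (lpnorm p m \<delta>)\<^sup>2"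
proof -
  obtain f' f'' where f': "\<And>s. DERIV (\<lambda>s. (lpnorm p m (\<lambda>k. \<theta> k + s * \<delta> k))\<^sup>2) s :> f' s"
    and f'': "\<And>s. DERIV f' s :> f'' s" and bound: "\<And>s. f'' s \<le> 2 * (p - 1) * (lpnorm p m \<delta>)\<^sup>2"
    using lpnorm_sq_line_second_derivative[OF p, where m=m and \<theta>=\<theta> and \<delta>=\<delta>] by blast
  have "(lpnorm p m (\<lambda>k. \<theta> k + s * \<delta> k))\<^sup>2 \<ge> (lpnorm p m (\<lambda>k. \<theta> k + 0 * \<delta> k))\<^sup>2 + s * dot m \<delta> g"
    for s
    using subgradient[of "\<lambda>k. \<theta> k + s * \<delta> k"] by (simp add: dot_def sum_distrib_left algebra_simps)
  then have "f' 0 = dot m \<delta> g"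
    by (rule DERIV_eq_slope_of_supporting_line[OF _ f'])
  then show ?thesis
    using second_derivative_upper_bound[OF f' f'' bound, of 1] by (simp add: field_simps)
qed

section \<open>Pinsker's inequality and strong convexity of \<open>KL\<close>\<close>

lemma sum_pos_if_support_pos:
  fixes a b :: "'i \<Rightarrow> real"
  assumes "finite S" and "\<And>i. i \<in> S \<Longrightarrow> a i \<ge> 0" and "\<And>i. i \<in> S \<Longrightarrow> b i \<ge> 0"
    and "\<And>i. i \<in> S \<Longrightarrow> a i > 0 \<Longrightarrow> b i > 0" and "(\<Sum>i\<in>S. a i) > 0"
  shows "(\<Sum>i\<in>S. b i) > 0"
proof -
  have "\<exists>j\<in>S. a j \<noteq> 0"
  proof (rule ccontr)
    assume "\<not> ?thesis"
    then have "(\<Sum>i\<in>S. a i) = 0" by (intro sum.neutral) auto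
    with assms(5) show False by simp
  qed
  then obtain j where "j \<in> S" "a j \<noteq> 0" by blast
  with assms(2,4) have "j \<in> S" "b j > 0" by (auto simp: order_less_le)
  then show ?thesis by (rule sum_pos2[OF assms(1)]) (use assms(3) in auto)
qed

lemma log_sum_inequality:
  fixes a b :: "'i \<Rightarrow> real"
  assumes fin: "finite S" and a: "\<And>i. i \<in> S \<Longrightarrow> a i \<ge> 0" and b: "\<And>i. i \<in> S \<Longrightarrow> b i \<ge> 0"
    and supp: "\<And>i. i \<in> S \<Longrightarrow> a i > 0 \<Longrightarrow> b i > 0"
  shows "(\<Sum>i\<in>S. a i * ln (a i / b i)) \<ge> (\<Sum>i\<in>S. a i) * ln ((\<Sum>i\<in>S. a i) / (\<Sum>i\<in>S. b i))"
proof (cases "(\<Sum>i\<in>S. a i) = 0")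
  case True
  then show ?thesis using fin a by (simp add: sum_nonneg_eq_0_iff)
next
  case False
  define A where "A = (\<Sum>i\<in>S. a i)"
  define B where "B = (\<Sum>i\<in>S. b i)"
  have A: "A > 0" using False a by (simp add: A_def order_less_le sum_nonneg)
  have B: "B > 0" unfolding B_def using sum_pos_if_support_pos[OF fin a b supp] A by (simp add: A_def)
  have "a i * ln (a i / b i) \<ge> a i * ln (A / B) + a i - b i * (A / B)" if i: "i \<in> S" for i
  proof (cases "a i = 0")
    case True
    then show ?thesis using b[OF i] A B by simp
  next
    case False
    then have ai: "a i > 0" using a[OF i] by simp
    then have bi: "b i > 0" using supp[OF i] by simp
    have "ln (A / B) - ln (a i / b i) = ln (b i * A / (a i * B))"
      using ai bi A B by (simp add: ln_div ln_mult)
    also have "\<dots> \<le> b i * A / (a i * B) - 1"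
      by (rule ln_le_minus_one) (use ai bi A B in simp)
    finally have "a i * (ln (A / B) - ln (a i / b i)) \<le> a i * (b i * A / (a i * B) - 1)"
      using ai by (simp add: mult_left_mono)
    then show ?thesis using ai by (simp add: algebra_simps)
  qed
  then have "(\<Sum>i\<in>S. a i * ln (a i / b i)) \<ge> (\<Sum>i\<in>S. a i * ln (A / B) + a i - b i * (A / B))"
    by (rule sum_mono)
  also have "(\<Sum>i\<in>S. a i * ln (A / B) + a i - b i * (A / B)) = A * ln (A / B) + A - B * (A / B)"
    by (simp add: sum.distrib sum_subtractf A_def B_def sum_distrib_right sum_divide_distrib)
  also have "\<dots> = A * ln (A / B)" using B by simp
  finally show ?thesis by (simp add: A_def B_def)
qed

lemma DERIV_mult_ln_div:
  fixes a x :: real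
  assumes "a \<ge> 0" and "x > 0 \<or> a = 0"
  shows "DERIV (\<lambda>x. a * ln (a / x)) x :> - a / x"
proof (cases "a = 0")
  case False
  with assms have x: "x > 0" and a: "a > 0" by auto
  have "DERIV (\<lambda>x. a * (ln a - ln x)) x :> - a / x"
    using x by (auto intro!: derivative_eq_intros)
  then show ?thesis
    by (rule has_field_derivative_transform_within_open[where S="{0<..}"])
       (use x a in \<open>auto simp: ln_div\<close>)
qed simp

lemma binary_pinsker:
  fixes a b :: real
  assumes a: "0 \<le> a" "a \<le> 1" and b: "0 \<le> b" "b \<le> 1"
    and supp: "a > 0 \<Longrightarrow> b > 0" "a < 1 \<Longrightarrow> b < 1"
  shows "a * ln (a / b) + (1 - a) * ln ((1 - a) / (1 - b)) \<ge> 2 * (a - b)\<^sup>2"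
proof (cases "b = 0 \<or> b = 1")
  case True
  then have "a = b" using a supp by force
  then show ?thesis using True by auto
next
  case False
  with b have b: "0 < b" "b < 1" by auto
  define g where "g x = a * ln (a / x) + (1 - a) * ln ((1 - a) / (1 - x)) - 2 * (a - x)\<^sup>2" for x
  define g' where "g' x = - a / x + (1 - a) / (1 - x) + 4 * (a - x)" for x
  have dg: "DERIV g x :> g' x" if "x > 0 \<or> a = 0" "x < 1 \<or> a = 1" for x
  proof -
    have "DERIV (\<lambda>x. a * ln (a / x)) x :> - a / x"
      by (rule DERIV_mult_ln_div) (use a that in auto)
    moreover have "DERIV (\<lambda>x. (1 - a) * ln ((1 - a) / (1 - x))) x :> - (1 - a) / (1 - x) * - 1"
      by (rule DERIV_chain2[OF DERIV_mult_ln_div]) (use a that in \<open>auto intro!: derivative_eq_intros\<close>)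
    then have "DERIV (\<lambda>x. (1 - a) * ln ((1 - a) / (1 - x))) x :> (1 - a) / (1 - x)"
      by (rule DERIV_cong) (simp add: field_simps)
    moreover have "DERIV (\<lambda>x. 2 * (a - x)\<^sup>2) x :> - 4 * (a - x)"
      by (auto intro!: derivative_eq_intros)
    ultimately have "DERIV g x :> - a / x + (1 - a) / (1 - x) - - 4 * (a - x)"
      unfolding g_def by (intro DERIV_diff DERIV_add)
    then show ?thesis by (rule DERIV_cong) (simp add: g'_def algebra_simps)
  qed
  have g'_factor: "g' x = (x - a) * (1 / (x * (1 - x)) - 4) \<and> 1 / (x * (1 - x)) - 4 \<ge> 0"
    if "0 < x" "x < 1" for x
  proof
    show "g' x = (x - a) * (1 / (x * (1 - x)) - 4)"
      using that by (simp add: g'_def field_simps)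
    have "4 * (x * (1 - x)) \<le> 1" using sum_squares_ge_zero[of "2*x - 1" 0]
      by (simp add: power2_eq_square algebra_simps)
    then show "1 / (x * (1 - x)) - 4 \<ge> 0" using that by (simp add: le_divide_eq)
  qed
  have "g a \<le> g b"
  proof (cases "a \<le> b")
    case True
    show ?thesis
    proof (rule DERIV_nonneg_imp_nondecreasing[OF True])
      fix x assume x: "a \<le> x" "x \<le> b"
      show "\<exists>y. DERIV g x :> y \<and> y \<ge> 0"
      proof (cases "x = 0")
        case True
        with x a have "a = 0" by simp
        with True show ?thesis using dg[of 0] by (auto simp: g'_def)
      next
        case False
        with x a b have "0 < x" "x < 1" by auto
        with g'_factor[of x] x dg[of x] show ?thesis by auto
      qed
    qed
  next
    case False
    show ?thesis
    proof (rule DERIV_nonpos_imp_nonincreasing[of b a g])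
      fix x assume x: "b \<le> x" "x \<le> a"
      show "\<exists>y. DERIV g x :> y \<and> y \<le> 0"
      proof (cases "x = 1")
        case True
        with x a have "a = 1" by simp
        with True show ?thesis using dg[of 1] by (auto simp: g'_def)
      next
        case False
        with x a b have "0 < x" "x < 1" by auto
        with g'_factor[of x] x dg[of x] show ?thesis by (auto intro!: mult_nonpos_nonneg)
      qed
    qed (use False in auto)
  qed
  moreover have "g a = 0" by (cases "a = 0"; cases "a = 1") (auto simp: g_def)
  ultimately show ?thesis by (simp add: g_def)
qed

text \<open>Merge the coordinates where \<open>a \<ge> b\<close> and those where \<open>a < b\<close> (log-sum inequality) and
  apply the two-point case.\<close>
lemma pinsker_inequality:
  assumes a: "a \<in> simplex n" and b: "b \<in> simplex n"
    and supp: "\<And>i. i < n \<Longrightarrow> a i > 0 \<Longrightarrow> b i > 0"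
  shows "KL n a b \<ge> (\<Sum>i<n. \<bar>a i - b i\<bar>)\<^sup>2 / 2"
proof -
  define P where "P = {i. i < n \<and> b i \<le> a i}"
  define Q where "Q = {i. i < n \<and> a i < b i}"
  have fin: "finite P" "finite Q" and U: "{..<n} = P \<union> Q" and D: "P \<inter> Q = {}"
    by (auto simp: P_def Q_def)
  have a0: "\<And>i. i < n \<Longrightarrow> a i \<ge> 0" and b0: "\<And>i. i < n \<Longrightarrow> b i \<ge> 0"
    using a b by (auto simp: simplex_def)
  define \<alpha> where "\<alpha> = (\<Sum>i\<in>P. a i)"
  define \<beta> where "\<beta> = (\<Sum>i\<in>P. b i)"
  have aQ: "(\<Sum>i\<in>Q. a i) = 1 - \<alpha>" and bQ: "(\<Sum>i\<in>Q. b i) = 1 - \<beta>"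
    using a b sum.union_disjoint[OF fin D, of a] sum.union_disjoint[OF fin D, of b]
    by (auto simp: simplex_def \<alpha>_def \<beta>_def U)
  have "\<alpha> \<ge> 0" "\<beta> \<ge> 0"
    unfolding \<alpha>_def \<beta>_def using a0 b0 by (auto simp: P_def intro!: sum_nonneg)
  moreover have "1 - \<alpha> \<ge> 0" "1 - \<beta> \<ge> 0"
    unfolding aQ[symmetric] bQ[symmetric] using a0 b0 by (auto simp: Q_def intro!: sum_nonneg)
  ultimately have nonneg: "\<alpha> \<ge> 0" "1 - \<alpha> \<ge> 0" "\<beta> \<ge> 0" "1 - \<beta> \<ge> 0" by auto
  have "\<beta> > 0" if "\<alpha> > 0"
    using sum_pos_if_support_pos[OF fin(1), of a b] that a0 b0 supp
    unfolding \<alpha>_def \<beta>_def by (auto simp: P_def)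
  moreover have "\<beta> < 1" if "\<alpha> < 1"
    using sum_pos_if_support_pos[OF fin(2), of a b] that a0 b0 supp aQ bQ by (auto simp: Q_def)
  ultimately have binary: "\<alpha> * ln (\<alpha> / \<beta>) + (1 - \<alpha>) * ln ((1 - \<alpha>) / (1 - \<beta>)) \<ge> 2 * (\<alpha> - \<beta>)\<^sup>2"
    using nonneg by (intro binary_pinsker) auto
  have "KL n a b = (\<Sum>i\<in>P. a i * ln (a i / b i)) + (\<Sum>i\<in>Q. a i * ln (a i / b i))"
    unfolding KL_def U by (rule sum.union_disjoint[OF fin D])
  also have "\<dots> \<ge> \<alpha> * ln (\<alpha> / \<beta>) + (1 - \<alpha>) * ln ((1 - \<alpha>) / (1 - \<beta>))"
  proof (rule add_mono)
    show "\<alpha> * ln (\<alpha> / \<beta>) \<le> (\<Sum>i\<in>P. a i * ln (a i / b i))"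
      unfolding \<alpha>_def \<beta>_def
      by (rule log_sum_inequality[OF fin(1)]) (use a0 b0 supp in \<open>auto simp: P_def\<close>)
    show "(1 - \<alpha>) * ln ((1 - \<alpha>) / (1 - \<beta>)) \<le> (\<Sum>i\<in>Q. a i * ln (a i / b i))"
      unfolding aQ[symmetric] bQ[symmetric]
      by (rule log_sum_inequality[OF fin(2)]) (use a0 b0 supp in \<open>auto simp: Q_def\<close>)
  qed
  finally have KL: "KL n a b \<ge> 2 * (\<alpha> - \<beta>)\<^sup>2" using binary by linarith
  have "(\<Sum>i<n. \<bar>a i - b i\<bar>) = (\<Sum>i\<in>P. a i - b i) + (\<Sum>i\<in>Q. b i - a i)"
    unfolding U sum.union_disjoint[OF fin D] by (auto simp: P_def Q_def intro!: arg_cong2[where f="(+)"] sum.cong)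
  also have "\<dots> = 2 * (\<alpha> - \<beta>)"
    using aQ bQ by (simp add: sum_subtractf \<alpha>_def \<beta>_def)
  finally have l1: "(\<Sum>i<n. \<bar>a i - b i\<bar>) = 2 * (\<alpha> - \<beta>)" .
  have "(\<Sum>i<n. \<bar>a i - b i\<bar>)\<^sup>2 / 2 = 2 * (\<alpha> - \<beta>)\<^sup>2"
    unfolding l1 by (simp add: power2_eq_square field_simps)
  then show ?thesis using KL by simp
qed

lemma xlogx_ratio_split:
  fixes x m u :: real
  assumes "x \<ge> 0" "m > 0" "u > 0"
  shows "x * ln (x / u) = x * ln (x / m) + x * ln (m / u)"
  using assms by (cases "x = 0") (auto simp: ln_div algebra_simps)

lemma KL_mixture:
  assumes u: "\<And>i. i < n \<Longrightarrow> u i > 0" and a: "a \<in> simplex n" and b: "b \<in> simplex n"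
    and l: "0 < l" "l < 1"
  defines "m \<equiv> \<lambda>i. (1 - l) * a i + l * b i"
  shows "KL n m u = (1 - l) * KL n a u + l * KL n b u - ((1 - l) * KL n a m + l * KL n b m)"
proof -
  have a0: "\<And>i. i < n \<Longrightarrow> a i \<ge> 0" and b0: "\<And>i. i < n \<Longrightarrow> b i \<ge> 0"
    using a b by (auto simp: simplex_def)
  have "m i * ln (m i / u i) = (1 - l) * (a i * ln (a i / u i)) + l * (b i * ln (b i / u i))
      - ((1 - l) * (a i * ln (a i / m i)) + l * (b i * ln (b i / m i)))"
    if i: "i < n" for i
  proof (cases "m i = 0")
    case True
    moreover have "(1 - l) * a i \<ge> 0" "l * b i \<ge> 0" using a0[OF i] b0[OF i] l by simp_all
    ultimately have "a i = 0" "b i = 0"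
      using l unfolding m_def by (simp_all add: add_nonneg_eq_0_iff)
    then show ?thesis using True by simp
  next
    case False
    then have mi: "m i > 0" using a0[OF i] b0[OF i] l by (simp add: m_def order_less_le)
    show ?thesis
      using xlogx_ratio_split[OF a0[OF i] mi u[OF i]] xlogx_ratio_split[OF b0[OF i] mi u[OF i]]
      by (simp add: m_def algebra_simps)
  qed
  then show ?thesis
    unfolding KL_def by (simp add: sum.distrib sum_subtractf sum_distrib_left)
qed

lemma simplex_mixture:
  assumes "a \<in> simplex n" "b \<in> simplex n" "0 \<le> l" "l \<le> 1"
  shows "(\<lambda>i. (1 - l) * a i + l * b i) \<in> simplex n"
  using assms by (auto simp: simplex_def sum.distrib sum_distrib_left[symmetric])

text \<open>Compare the minimiser \<open>a\<close> with the mixtures \<open>(1 - l) a + l b\<close>, bound the two \<open>KL\<close> terms of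
  \<open>KL_mixture\<close> by Pinsker's inequality and let \<open>l \<rightarrow> 0\<close>.\<close>
lemma linear_plus_KL_quadratic_growth:
  assumes u: "\<And>i. i < n \<Longrightarrow> u i > 0" and a: "a \<in> simplex n" and b: "b \<in> simplex n"
    and min: "\<And>v. v \<in> simplex n \<Longrightarrow> dot n v c + KL n v u \<ge> dot n a c + KL n a u"
  shows "dot n b c + KL n b u - (dot n a c + KL n a u) \<ge> (\<Sum>i<n. \<bar>b i - a i\<bar>)\<^sup>2 / 2"
proof -
  define J where "J v = dot n v c + KL n v u" for v
  define X where "X = (\<Sum>i<n. \<bar>b i - a i\<bar>)\<^sup>2 / 2"
  have a0: "\<And>i. i < n \<Longrightarrow> a i \<ge> 0" and b0: "\<And>i. i < n \<Longrightarrow> b i \<ge> 0"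
    using a b by (auto simp: simplex_def)
  have "J b - J a \<ge> (1 - l)\<^sup>2 * X" if l: "0 < l" "l < 1" for l
  proof -
    define m where "m = (\<lambda>i. (1 - l) * a i + l * b i)"
    have m: "m \<in> simplex n" unfolding m_def by (rule simplex_mixture[OF a b]) (use l in auto)
    have "dot n m c = (\<Sum>k<n. (1 - l) * (a k * c k) + l * (b k * c k))"
      by (simp add: dot_def m_def algebra_simps)
    then have "dot n m c = (1 - l) * dot n a c + l * dot n b c"
      by (simp add: dot_def sum.distrib sum_distrib_left)
    then have Jm: "J m = (1 - l) * J a + l * J b - ((1 - l) * KL n a m + l * KL n b m)"
      using KL_mixture[where u=u, OF u a b l, folded m_def] by (simp add: J_def algebra_simps)
    have supp: "m i > 0" if "i < n" "a i > 0 \<or> b i > 0" for i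
      using a0[OF that(1)] b0[OF that(1)] l that(2) by (auto simp: m_def add_pos_nonneg add_nonneg_pos)
    have "KL n a m \<ge> (\<Sum>i<n. \<bar>a i - m i\<bar>)\<^sup>2 / 2" "KL n b m \<ge> (\<Sum>i<n. \<bar>b i - m i\<bar>)\<^sup>2 / 2"
      using supp by (blast intro: pinsker_inequality[OF a m] pinsker_inequality[OF b m])+
    then have "KL n a m \<ge> 0" "KL n b m \<ge> (\<Sum>i<n. \<bar>b i - m i\<bar>)\<^sup>2 / 2"
      by (auto intro: order_trans[rotated] simp del: divide_le_eq_numeral1)
    moreover have "\<bar>b i - m i\<bar> = (1 - l) * \<bar>b i - a i\<bar>" for i
    proof -
      have "b i - m i = (1 - l) * (b i - a i)" by (simp add: m_def algebra_simps)
      then show ?thesis using l by (simp add: abs_mult)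
    qed
    then have "(\<Sum>i<n. \<bar>b i - m i\<bar>)\<^sup>2 / 2 = (1 - l)\<^sup>2 * X"
      by (simp add: X_def power_mult_distrib flip: sum_distrib_left)
    ultimately have "(1 - l) * KL n a m \<ge> 0" "l * KL n b m \<ge> l * ((1 - l)\<^sup>2 * X)"
      using l by (simp_all add: mult_left_mono)
    moreover have "J a \<le> J m" using min[OF m] by (simp add: J_def)
    ultimately have "l * ((1 - l)\<^sup>2 * X) \<le> l * (J b - J a)"
      using Jm by (simp add: algebra_simps)
    then show ?thesis using l by simp
  qed
  then have "\<forall>\<^sub>F l in at_right 0. (1 - l)\<^sup>2 * X \<le> J b - J a"
    by (auto simp: eventually_at_right_field intro!: exI[of _ 1])
  moreover have "((\<lambda>l. (1 - l)\<^sup>2 * X) \<longlongrightarrow> X) (at_right 0)"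
    by (auto intro!: tendsto_eq_intros)
  ultimately have "X \<le> J b - J a"
    using tendsto_upperbound trivial_limit_at_right_real by blast
  then show ?thesis by (simp add: J_def X_def)
qed

section \<open>The \<open>\<ell>\<^sub>q\<close> regulariser and its conjugate\<close>

definition qnorm_reg :: "real \<Rightarrow> nat \<Rightarrow> (nat \<Rightarrow> real) \<Rightarrow> real" where
  "qnorm_reg q m w = 1 / (2 * (q - 1)) * (lpnorm q m w)\<^sup>2"

text \<open>The convex conjugate of \<open>qnorm_reg q m / \<eta>\<close> for the conjugate exponent \<open>p\<close>.\<close>
definition qnorm_reg_conj :: "real \<Rightarrow> nat \<Rightarrow> real \<Rightarrow> (nat \<Rightarrow> real) \<Rightarrow> real" where
  "qnorm_reg_conj p m \<eta> \<theta> = \<eta> / (2 * (p - 1)) * (lpnorm p m \<theta>)\<^sup>2"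

lemma qnorm_reg_eq:
  assumes "p > 1" and "1/p + 1/q = 1"
  shows "qnorm_reg q m w = (p - 1) / 2 * (lpnorm q m w)\<^sup>2"
proof -
  have "(p - 1) * (q - 1) = 1" "q > 1" using conjugate_exponents[OF assms] by auto
  then have "1 / (2 * (q - 1)) = (p - 1) / 2" by (simp add: field_simps)
  then show ?thesis by (simp only: qnorm_reg_def)
qed

lemma qnorm_reg_fenchel_young:
  assumes p: "p > 1" and pq: "1/p + 1/q = 1" and \<eta>: "\<eta> > 0"
  shows "dot m \<theta> w - qnorm_reg q m w / \<eta> \<le> qnorm_reg_conj p m \<eta> \<theta>"
proof -
  define a where "a = lpnorm p m \<theta>"
  define b where "b = lpnorm q m w"
  have "dot m \<theta> w \<le> a * b"
    using abs_dot_le_lpnorm[OF p pq, of m \<theta> w] by (simp add: a_def b_def)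
  also have "a * b \<le> \<eta> / (2 * (p - 1)) * a\<^sup>2 + (p - 1) / 2 * b\<^sup>2 / \<eta>"
  proof -
    have "0 \<le> (\<eta> * a - (p - 1) * b)\<^sup>2 / (2 * \<eta> * (p - 1))"
      using p \<eta> by simp
    also have "\<dots> = \<eta> / (2 * (p - 1)) * a\<^sup>2 + (p - 1) / 2 * b\<^sup>2 / \<eta> - a * b"
      using p \<eta> by (simp add: field_simps power2_eq_square)
    finally show ?thesis by simp
  qed
  finally show ?thesis
    by (simp add: qnorm_reg_eq[OF p pq] qnorm_reg_conj_def a_def b_def)
qed

lemma qnorm_reg_conj_attained:
  assumes p: "p > 1" and pq: "1/p + 1/q = 1" and \<eta>: "\<eta> > 0"
  obtains v where "v \<in> vecs m" "dot m \<theta> v - qnorm_reg q m v / \<eta> = qnorm_reg_conj p m \<eta> \<theta>"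
proof -
  have q: "q > 1" using conjugate_exponents[OF p pq] by simp
  obtain v\<^sub>0 where v\<^sub>0: "v\<^sub>0 \<in> vecs m" "lpnorm q m v\<^sub>0 \<le> 1" "dot m \<theta> v\<^sub>0 = lpnorm p m \<theta>"
    using lpnorm_dual_witness[OF p pq] by blast
  define N where "N = lpnorm p m \<theta>"
  define c where "c = \<eta> * N / (p - 1)"
  have c: "c \<ge> 0" using \<eta> p by (simp add: c_def N_def lpnorm_nonneg)
  define v where "v k = c * v\<^sub>0 k" for k
  have "v \<in> vecs m" using v\<^sub>0(1) by (simp add: vecs_def v_def)
  have "(lpnorm q m v)\<^sup>2 \<le> c\<^sup>2"
    using lpnorm_cmult[of q m c v\<^sub>0] q c v\<^sub>0(2) lpnorm_nonneg[of q m v\<^sub>0]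
    by (simp add: v_def[abs_def] power_mult_distrib mult_left_le power_le_one)
  then have "qnorm_reg q m v / \<eta> \<le> (p - 1) / 2 * c\<^sup>2 / \<eta>"
    using p \<eta> by (simp add: qnorm_reg_eq[OF p pq] divide_right_mono)
  moreover have "dot m \<theta> v = c * N"
    using v\<^sub>0(3) by (simp add: v_def[abs_def] dot_cmult_right N_def)
  moreover have "c * N - (p - 1) / 2 * c\<^sup>2 / \<eta> = qnorm_reg_conj p m \<eta> \<theta>"
  proof -
    have "\<eta> * N / r * N - r / 2 * (\<eta> * N / r)\<^sup>2 / \<eta> = \<eta> / (2 * r) * N\<^sup>2" if "r > 0" for r
      using that \<eta> by (simp add: field_simps power2_eq_square)
    then show ?thesis using p by (simp add: c_def qnorm_reg_conj_def N_def)
  qed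
  ultimately have "dot m \<theta> v - qnorm_reg q m v / \<eta> \<ge> qnorm_reg_conj p m \<eta> \<theta>"
    by linarith
  with qnorm_reg_fenchel_young[OF p pq \<eta>] \<open>v \<in> vecs m\<close> show ?thesis
    by (meson order_antisym that)
qed

lemma qnorm_reg_conj_smooth:
  assumes p: "p \<ge> 2" and \<eta>: "\<eta> > 0"
    and subgradient: "\<And>z. qnorm_reg_conj p m \<eta> z \<ge> qnorm_reg_conj p m \<eta> \<theta> + dot m (\<lambda>k. z k - \<theta> k) g"
  shows "qnorm_reg_conj p m \<eta> (\<lambda>k. \<theta> k + \<delta> k)
    \<le> qnorm_reg_conj p m \<eta> \<theta> + dot m \<delta> g + \<eta> / 2 * (lpnorm p m \<delta>)\<^sup>2"
proof -
  define s where "s = 2 * (p - 1) / \<eta>"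
  have s: "s > 0" using p \<eta> by (simp add: s_def)
  have scale: "(lpnorm p m z)\<^sup>2 = s * qnorm_reg_conj p m \<eta> z" for z
    using p \<eta> by (simp add: qnorm_reg_conj_def s_def)
  have "(lpnorm p m z)\<^sup>2 \<ge> (lpnorm p m \<theta>)\<^sup>2 + dot m (\<lambda>k. z k - \<theta> k) (\<lambda>k. s * g k)" for z
    using mult_left_mono[OF subgradient[of z], of s] s by (simp add: scale dot_cmult_right algebra_simps)
  then have "(lpnorm p m (\<lambda>k. \<theta> k + \<delta> k))\<^sup>2
      \<le> (lpnorm p m \<theta>)\<^sup>2 + dot m \<delta> (\<lambda>k. s * g k) + (p - 1) * (lpnorm p m \<delta>)\<^sup>2"
    by (rule lpnorm_sq_smooth[OF p])
  moreover have "(p - 1) * (lpnorm p m \<delta>)\<^sup>2 = s * (\<eta> / 2 * (lpnorm p m \<delta>)\<^sup>2)"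
    using \<eta> by (simp add: s_def)
  ultimately have "s * qnorm_reg_conj p m \<eta> (\<lambda>k. \<theta> k + \<delta> k)
      \<le> s * (qnorm_reg_conj p m \<eta> \<theta> + dot m \<delta> g + \<eta> / 2 * (lpnorm p m \<delta>)\<^sup>2)"
    by (simp add: scale dot_cmult_right algebra_simps)
  then show ?thesis using s by simp
qed

section \<open>Regret of the two players\<close>

text \<open>\<open>w\<close> maximises the regularised gain at the optimistic point \<open>S + P\<close> (cumulative gain plus
  a prediction \<open>P\<close> of the next gain \<open>G\<close>), hence is a subgradient of the conjugate there; smoothness
  of the conjugate then bounds its increase by the gain of \<open>w\<close> plus the squared prediction error.\<close>
lemma optimistic_ftrl_step:
  assumes p: "p \<ge> 2" and pq: "1/p + 1/q = 1" and \<eta>: "\<eta> > 0"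
    and opt: "\<And>v. v \<in> vecs m \<Longrightarrow>
      dot m (\<lambda>k. S k + P k) v - qnorm_reg q m v / \<eta> \<le> dot m (\<lambda>k. S k + P k) w - qnorm_reg q m w / \<eta>"
  shows "qnorm_reg_conj p m \<eta> (\<lambda>k. S k + G k)
    \<le> qnorm_reg_conj p m \<eta> S + dot m G w + \<eta> / 2 * (lpnorm p m (\<lambda>k. G k - P k))\<^sup>2"
proof -
  have p1: "p > 1" using p by simp
  define \<Theta> where "\<Theta> = (\<lambda>k. S k + P k)"
  define V where "V = dot m \<Theta> w - qnorm_reg q m w / \<eta>"
  obtain v where "v \<in> vecs m" "dot m \<Theta> v - qnorm_reg q m v / \<eta> = qnorm_reg_conj p m \<eta> \<Theta>"
    using qnorm_reg_conj_attained[OF p1 pq \<eta>] by blast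
  with opt have "V \<ge> qnorm_reg_conj p m \<eta> \<Theta>" unfolding V_def \<Theta>_def by fastforce
  then have "qnorm_reg_conj p m \<eta> z \<ge> qnorm_reg_conj p m \<eta> \<Theta> + dot m (\<lambda>k. z k - \<Theta> k) w" for z
    using qnorm_reg_fenchel_young[OF p1 pq \<eta>, of m z w] by (simp add: V_def dot_diff_left)
  then have "qnorm_reg_conj p m \<eta> (\<lambda>k. \<Theta> k + (G k - P k))
      \<le> qnorm_reg_conj p m \<eta> \<Theta> + dot m (\<lambda>k. G k - P k) w + \<eta> / 2 * (lpnorm p m (\<lambda>k. G k - P k))\<^sup>2"
    by (rule qnorm_reg_conj_smooth[OF p \<eta>])
  also have "qnorm_reg_conj p m \<eta> \<Theta> + dot m (\<lambda>k. G k - P k) w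
      \<le> dot m S w - qnorm_reg q m w / \<eta> + dot m G w"
    using \<open>V \<ge> _\<close> qnorm_reg_fenchel_young[OF p1 pq \<eta>, of m \<Theta> w]
    by (simp add: V_def \<Theta>_def dot_add_left dot_diff_left)
  also have "\<dots> \<le> qnorm_reg_conj p m \<eta> S + dot m G w"
    using qnorm_reg_fenchel_young[OF p1 pq \<eta>, of m S w] by simp
  finally show ?thesis by (simp add: \<Theta>_def)
qed

lemma optimistic_ftrl_regret:
  fixes G w :: "nat \<Rightarrow> nat \<Rightarrow> real"
  assumes p: "p \<ge> 2" and pq: "1/p + 1/q = 1" and \<eta>: "\<eta> > 0"
    and opt: "\<And>t v. t \<in> {1..T} \<Longrightarrow> v \<in> vecs m \<Longrightarrow>
      dot m (\<lambda>k. (\<Sum>j\<in>{1..<t}. G j k) + G (t - 1) k) v - qnorm_reg q m v / \<eta>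
        \<le> dot m (\<lambda>k. (\<Sum>j\<in>{1..<t}. G j k) + G (t - 1) k) (w t) - qnorm_reg q m (w t) / \<eta>"
  shows "(\<Sum>t\<in>{1..T}. dot m (G t) u) - qnorm_reg q m u / \<eta>
    \<le> (\<Sum>t\<in>{1..T}. dot m (G t) (w t) + \<eta> / 2 * (lpnorm p m (\<lambda>k. G t k - G (t - 1) k))\<^sup>2)"
proof -
  define S where "S t = (\<lambda>k. \<Sum>j\<in>{1..t}. G j k)" for t
  have "qnorm_reg_conj p m \<eta> (S t)
      \<le> (\<Sum>s\<in>{1..t}. dot m (G s) (w s) + \<eta> / 2 * (lpnorm p m (\<lambda>k. G s k - G (s - 1) k))\<^sup>2)"
    if "t \<le> T" for t
    using that
  proof (induction t)
    case 0
    then show ?case by (simp add: S_def qnorm_reg_conj_def lpnorm_def)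
  next
    case (Suc t)
    have "S (Suc t) = (\<lambda>k. S t k + G (Suc t) k)" by (simp add: S_def)
    moreover have "{1..<Suc t} = {1..t}" by auto
    then have "qnorm_reg_conj p m \<eta> (\<lambda>k. S t k + G (Suc t) k)
        \<le> qnorm_reg_conj p m \<eta> (S t) + dot m (G (Suc t)) (w (Suc t))
          + \<eta> / 2 * (lpnorm p m (\<lambda>k. G (Suc t) k - G t k))\<^sup>2"
      using opt[of "Suc t"] Suc.prems by (intro optimistic_ftrl_step[OF p pq \<eta>]) (simp add: S_def)
    ultimately show ?case using Suc by simp
  qed
  moreover have "(\<Sum>t\<in>{1..T}. dot m (G t) u) - qnorm_reg q m u / \<eta> \<le> qnorm_reg_conj p m \<eta> (S T)"
    using qnorm_reg_fenchel_young[of p q \<eta> m "S T" u] p pq \<eta> by (simp add: S_def dot_sum_left)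
  ultimately show ?thesis by fastforce
qed

definition uniform :: "nat \<Rightarrow> nat \<Rightarrow> real" where
  "uniform n = (\<lambda>i. if i < n then 1 / real n else 0)"

lemma uniform_in_simplex: "n > 0 \<Longrightarrow> uniform n \<in> simplex n"
  by (simp add: simplex_def uniform_def)

lemma KL_self: "KL n a a = 0"
  unfolding KL_def by (intro sum.neutral) simp

lemma KL_nonneg:
  assumes "a \<in> simplex n" "b \<in> simplex n" "\<And>i. i < n \<Longrightarrow> b i > 0"
  shows "KL n a b \<ge> 0"
  by (rule order_trans[OF _ pinsker_inequality[OF assms(1,2)]]) (use assms(3) in auto)

lemma KL_vertex_uniform:
  assumes "i < n"
  shows "KL n (\<lambda>j. if j = i then 1 else 0) (uniform n) = ln n"
proof -
  have "KL n (\<lambda>j. if j = i then 1 else 0) (uniform n) = (\<Sum>j<n. if j = i then ln n else 0)"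
    unfolding KL_def by (rule sum.cong) (auto simp: uniform_def ln_div)
  then show ?thesis using assms by simp
qed

lemma vertex_in_simplex: "i < n \<Longrightarrow> (\<lambda>j. if j = i then 1 else 0) \<in> simplex n"
  by (simp add: simplex_def)

lemma dot_vertex: "i < m \<Longrightarrow> dot m (\<lambda>j. if j = i then 1 else 0) a = a i"
  by (simp add: dot_def if_distrib[of "\<lambda>z. z * _"] cong: if_cong)

text \<open>Follow-the-regularised-leader with regulariser \<open>KL(\<cdot>, P 0) / \<eta>\<close> beats every fixed \<open>r\<close>
  up to \<open>KL(r, P 0)\<close>, like be-the-leader, and by the quadratic growth of the regularised objective
  around its minimiser each round earns an extra \<open>\<parallel>P t - P (t - 1)\<parallel>\<^sub>1\<^sup>2 / 2\<close>.\<close>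
lemma entropic_ftrl_be_the_leader:
  fixes L P :: "nat \<Rightarrow> nat \<Rightarrow> real"
  assumes u: "\<And>j. j < n \<Longrightarrow> P 0 j > 0" and P0: "P 0 \<in> simplex n"
    and opt: "\<And>t. t \<in> {1..T} \<Longrightarrow> P t \<in> simplex n \<and>
      (\<forall>r\<in>simplex n. 1 / \<eta> * (\<Sum>s\<in>{1..t}. dot n r (L s)) + KL n r (P 0)
                     \<ge> 1 / \<eta> * (\<Sum>s\<in>{1..t}. dot n (P t) (L s)) + KL n (P t) (P 0))"
    and r: "r \<in> simplex n"
  shows "(\<Sum>t\<in>{1..T}. 1 / \<eta> * dot n (P t) (L t) + (\<Sum>j<n. \<bar>P t j - P (t - 1) j\<bar>)\<^sup>2 / 2)
    \<le> 1 / \<eta> * (\<Sum>t\<in>{1..T}. dot n r (L t)) + KL n r (P 0)"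
proof -
  define c where "c t = (\<lambda>j. 1 / \<eta> * (\<Sum>s\<in>{1..t}. L s j))" for t
  define J where "J t r = dot n r (c t) + KL n r (P 0)" for t r
  have J: "J t r = 1 / \<eta> * (\<Sum>s\<in>{1..t}. dot n r (L s)) + KL n r (P 0)" for t r
    by (simp only: J_def c_def dot_cmult_right dot_sum_right)
  have simplex: "P t \<in> simplex n" if "t \<le> T" for t
    using that opt[of t] P0 by (cases "t = 0") auto
  have min: "J t (P t) \<le> J t r" if "t \<le> T" "r \<in> simplex n" for t r
  proof (cases "t = 0")
    case True
    then show ?thesis using KL_nonneg[OF that(2) P0 u] by (simp add: J KL_self)
  next
    case False
    then show ?thesis using that opt[of t] by (simp add: J)
  qed
  have step: "J t (P t) - J (t - 1) (P (t - 1))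
      \<ge> 1 / \<eta> * dot n (P t) (L t) + (\<Sum>j<n. \<bar>P t j - P (t - 1) j\<bar>)\<^sup>2 / 2"
    if t: "t \<in> {1..T}" for t
  proof -
    have "J (t - 1) (P t) - J (t - 1) (P (t - 1)) \<ge> (\<Sum>j<n. \<bar>P t j - P (t - 1) j\<bar>)\<^sup>2 / 2"
      unfolding J_def
    proof (rule linear_plus_KL_quadratic_growth[where u="P 0", OF u])
      show "P (t - 1) \<in> simplex n" "P t \<in> simplex n" using t simplex by auto
      show "dot n v (c (t - 1)) + KL n v (P 0) \<ge> dot n (P (t - 1)) (c (t - 1)) + KL n (P (t - 1)) (P 0)"
        if "v \<in> simplex n" for v
        using min[of "t - 1" v] that t by (auto simp: J_def)
    qed
    moreover obtain t' where "t = Suc t'" using t by (cases t) auto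
    then have "J t (P t) = J (t - 1) (P t) + 1 / \<eta> * dot n (P t) (L t)"
      by (simp add: J add_divide_distrib)
    ultimately show ?thesis by simp
  qed
  have telescope: "J t (P t) - J 0 (P 0)
      \<ge> (\<Sum>s\<in>{1..t}. 1 / \<eta> * dot n (P s) (L s) + (\<Sum>j<n. \<bar>P s j - P (s - 1) j\<bar>)\<^sup>2 / 2)"
    if "t \<le> T" for t
    using that
  proof (induction t)
    case (Suc t)
    then show ?case using step[of "Suc t"] by simp
  qed simp
  have "J 0 (P 0) = 0" by (simp add: J KL_self)
  with telescope[OF order_refl] min[OF order_refl r]
  have "(\<Sum>t\<in>{1..T}. 1 / \<eta> * dot n (P t) (L t) + (\<Sum>j<n. \<bar>P t j - P (t - 1) j\<bar>)\<^sup>2 / 2) \<le> J T r"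
    by linarith
  then show ?thesis by (simp add: J)
qed

lemma entropic_ftrl_regret:
  fixes L P :: "nat \<Rightarrow> nat \<Rightarrow> real"
  assumes \<eta>: "\<eta> > 0" and i: "i < n" and P0: "P 0 = uniform n"
    and opt: "\<And>t. t \<in> {1..T} \<Longrightarrow> P t \<in> simplex n \<and>
      (\<forall>r\<in>simplex n. 1 / \<eta> * (\<Sum>s\<in>{1..t}. dot n r (L s)) + KL n r (P 0)
                     \<ge> 1 / \<eta> * (\<Sum>s\<in>{1..t}. dot n (P t) (L s)) + KL n (P t) (P 0))"
  shows "(\<Sum>t\<in>{1..T}. dot n (P t) (L t) + \<eta> / 2 * (\<Sum>j<n. \<bar>P t j - P (t - 1) j\<bar>)\<^sup>2)
    \<le> (\<Sum>t\<in>{1..T}. L t i) + \<eta> * ln n"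
proof -
  have "(\<Sum>t\<in>{1..T}. 1 / \<eta> * dot n (P t) (L t) + (\<Sum>j<n. \<bar>P t j - P (t - 1) j\<bar>)\<^sup>2 / 2)
      \<le> 1 / \<eta> * (\<Sum>t\<in>{1..T}. L t i) + ln n"
  proof -
    have "P 0 \<in> simplex n" "\<And>j. j < n \<Longrightarrow> P 0 j > 0"
      using i by (simp_all add: P0 uniform_in_simplex) (simp add: uniform_def)
    from entropic_ftrl_be_the_leader[where P=P and T=T, OF this(2,1) opt vertex_in_simplex[OF i]]
    show ?thesis using i by (simp add: dot_vertex KL_vertex_uniform P0)
  qed
  from mult_left_mono[OF this, of \<eta>] \<eta>
  have "\<eta> * (\<Sum>t\<in>{1..T}. 1 / \<eta> * dot n (P t) (L t) + (\<Sum>j<n. \<bar>P t j - P (t - 1) j\<bar>)\<^sup>2 / 2)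
      \<le> \<eta> * (1 / \<eta> * (\<Sum>t\<in>{1..T}. L t i) + ln n)"
    by simp
  moreover have "\<eta> * (1 / \<eta> * a + b / 2) = a + \<eta> / 2 * b" for a b using \<eta> by (simp add: field_simps)
  ultimately show ?thesis
    using \<eta> by (simp add: sum_distrib_left distrib_left)
qed

section \<open>The margin game\<close>

definition ATr :: "nat \<Rightarrow> (nat \<Rightarrow> nat \<Rightarrow> real) \<Rightarrow> (nat \<Rightarrow> real) \<Rightarrow> (nat \<Rightarrow> real) \<Rightarrow> nat \<Rightarrow> real" where
  "ATr n x y r k = (\<Sum>i<n. r i * y i * x i k)"

lemma gval_eq_dot_Aw: "gval d n x y w r = dot n r (Aw d x y w)"
  by (simp add: gval_def dot_def)

lemma gval_eq_dot_ATr: "gval d n x y w r = dot d (ATr n x y r) w"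
proof -
  have "gval d n x y w r = (\<Sum>i<n. \<Sum>k<d. r i * y i * x i k * w k)"
    by (simp add: gval_def Aw_def sum_distrib_left algebra_simps)
  also have "\<dots> = dot d (ATr n x y r) w"
    by (simp add: dot_def ATr_def sum_distrib_right sum.swap[of _ "{..<n}"])
  finally show ?thesis .
qed

lemma ATr_diff: "ATr n x y (\<lambda>i. r i - s i) = (\<lambda>k. ATr n x y r k - ATr n x y s k)"
  by (simp add: ATr_def sum_subtractf algebra_simps fun_eq_iff)

lemma lpnorm_ATr_le:
  assumes p: "p > 1" and pq: "1/p + 1/q = 1"
    and rows: "\<And>i. i < n \<Longrightarrow> lpnorm p d (x i) \<le> 1 \<and> y i \<in> {-1, 1}"
  shows "lpnorm p d (ATr n x y r) \<le> (\<Sum>i<n. \<bar>r i\<bar>)"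
proof -
  obtain v where v: "lpnorm q d v \<le> 1" "dot d (ATr n x y r) v = lpnorm p d (ATr n x y r)"
    using lpnorm_dual_witness[OF p pq] by metis
  have "dot d (ATr n x y r) v = (\<Sum>i<n. r i * y i * dot d (x i) v)"
    using gval_eq_dot_ATr[of d n x y v r] by (simp add: gval_def Aw_def dot_def mult.assoc)
  also have "\<dots> \<le> (\<Sum>i<n. \<bar>r i\<bar>)"
  proof (rule sum_mono)
    fix i assume "i \<in> {..<n}"
    then have x: "lpnorm p d (x i) \<le> 1" and y: "\<bar>y i\<bar> = 1" using rows[of i] by auto
    have "\<bar>dot d (x i) v\<bar> \<le> lpnorm p d (x i) * lpnorm q d v"
      by (rule abs_dot_le_lpnorm[OF p pq])
    also have "\<dots> \<le> 1" using x v(1) by (simp add: mult_le_one lpnorm_nonneg)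
    finally have "\<bar>r i * y i * dot d (x i) v\<bar> \<le> \<bar>r i\<bar>"
      using y by (simp add: abs_mult mult_left_le)
    then show "r i * y i * dot d (x i) v \<le> \<bar>r i\<bar>" by simp
  qed
  finally show ?thesis using v(2) by simp
qed

lemma gval_ge_margin:
  assumes "r \<in> simplex n" and "\<And>i. i < n \<Longrightarrow> \<gamma> \<le> Aw d x y w i"
  shows "\<gamma> \<le> gval d n x y w r"
proof -
  have "(\<Sum>i<n. r i * \<gamma>) \<le> gval d n x y w r"
    unfolding gval_def using assms by (intro sum_mono mult_left_mono) (auto simp: simplex_def)
  moreover have "(\<Sum>i<n. r i * \<gamma>) = \<gamma>"
    using assms(1) by (simp add: simplex_def flip: sum_distrib_right)
  ultimately show ?thesis by simp
qed

lemma gval_cmult: "gval d n x y (\<lambda>k. c * w k) r = c * gval d n x y w r"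
  by (simp add: gval_eq_dot_ATr dot_cmult_right)

lemma Aw_scaled_sum: "Aw d x y (\<lambda>k. c * (\<Sum>s\<in>S. w s k)) i = c * (\<Sum>s\<in>S. Aw d x y (w s) i)"
  by (simp add: Aw_def sum_distrib_left sum.swap[of _ S] algebra_simps)

lemma scaled_comparator_gain:
  fixes r \<eta> T \<gamma> L :: real
  assumes "r > 0" and "\<eta> > 0" and "2 * L \<le> r * (T * \<gamma>)\<^sup>2"
  shows "\<eta> * L \<le> T * (r * \<eta> * T * \<gamma> * \<gamma>) - (r * \<eta> * T * \<gamma>)\<^sup>2 / (2 * r * \<eta>)"
proof -
  have "\<eta> * L \<le> \<eta> * (r * (T * \<gamma>)\<^sup>2 / 2)"
    using assms(2,3) by (intro mult_left_mono) auto
  also have "\<dots> = T * (r * \<eta> * T * \<gamma> * \<gamma>) - (r * \<eta> * T * \<gamma>)\<^sup>2 / (2 * r * \<eta>)"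
    using assms(1,2) by (simp add: field_simps power2_eq_square)
  finally show ?thesis .
qed

lemma time_bound_conjugate:
  assumes "p > 1" and "1/p + 1/q = 1" and "\<gamma> > 0" and "sqrt (2 * (p - 1) * L) / \<gamma> \<le> T"
  shows "2 * L \<le> (q - 1) * (T * \<gamma>)\<^sup>2"
proof -
  have q: "q > 1" and pq1: "(p - 1) * (q - 1) = 1" using conjugate_exponents[OF assms(1,2)] by auto
  have "sqrt (2 * (p - 1) * L) \<le> T * \<gamma>" using assms(3,4) by (simp add: divide_le_eq)
  then have "2 * (p - 1) * L \<le> (T * \<gamma>)\<^sup>2" by (rule sqrt_le_D)
  then have "(q - 1) * (2 * (p - 1) * L) \<le> (q - 1) * (T * \<gamma>)\<^sup>2"
    using q by (simp add: mult_left_mono)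
  moreover have "2 * L = 2 * ((p - 1) * (q - 1)) * L" using pq1 by simp
  moreover have "\<dots> = (q - 1) * (2 * (p - 1) * L)" by (simp only: mult_ac)
  ultimately show ?thesis by linarith
qed

context
  fixes p q :: real and d n :: nat and x :: "nat \<Rightarrow> nat \<Rightarrow> real" and y :: "nat \<Rightarrow> real"
    and \<eta> :: real and ww pp :: "nat \<Rightarrow> nat \<Rightarrow> real" and T :: nat
  assumes p: "2 \<le> p" and pq: "1 / p + 1 / q = 1" and \<eta>: "\<eta> > 0"
    and rows: "\<And>i. i < n \<Longrightarrow> lpnorm p d (x i) \<le> 1 \<and> y i \<in> {-1, 1}"
    and pp0: "pp 0 = uniform n"
    and w_opt: "\<And>t w. t \<in> {1..T} \<Longrightarrow> w \<in> vecs d \<Longrightarrow>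
      \<eta> * ((\<Sum>j\<in>{1..<t}. - gval d n x y w (pp j)) + (- gval d n x y w (pp (t - 1))))
        + 1 / (2 * (q - 1)) * (lpnorm q d w)\<^sup>2
      \<ge> \<eta> * ((\<Sum>j\<in>{1..<t}. - gval d n x y (ww t) (pp j)) + (- gval d n x y (ww t) (pp (t - 1))))
        + 1 / (2 * (q - 1)) * (lpnorm q d (ww t))\<^sup>2"
    and p_opt: "\<And>t. t \<in> {1..T} \<Longrightarrow> pp t \<in> simplex n \<and>
      (\<forall>r\<in>simplex n. 1 / \<eta> * (\<Sum>s\<in>{1..t}. gval d n x y (ww s) r) + KL n r (pp 0)
                     \<ge> 1 / \<eta> * (\<Sum>s\<in>{1..t}. gval d n x y (ww s) (pp t)) + KL n (pp t) (pp 0))"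
begin

text \<open>The \<open>\<eta>/2 \<parallel>pp t - pp (t - 1)\<parallel>\<^sub>1\<^sup>2\<close> penalty of the optimistic \<open>w\<close>-player is paid for by the
  stability bonus of the \<open>p\<close>-player.\<close>
lemma game_regret:
  assumes i: "i < n"
  shows "(\<Sum>t\<in>{1..T}. gval d n x y u (pp t)) - qnorm_reg q d u / \<eta>
    \<le> (\<Sum>t\<in>{1..T}. Aw d x y (ww t) i) + \<eta> * ln n"
proof -
  have p1: "p > 1" using p by simp
  define G where "G t = ATr n x y (pp t)" for t
  have "(\<Sum>t\<in>{1..T}. dot d (G t) u) - qnorm_reg q d u / \<eta>
      \<le> (\<Sum>t\<in>{1..T}. dot d (G t) (ww t) + \<eta> / 2 * (lpnorm p d (\<lambda>k. G t k - G (t - 1) k))\<^sup>2)"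
  proof (rule optimistic_ftrl_regret[OF p pq \<eta>])
    fix t v assume t: "t \<in> {1..T}" and v: "v \<in> vecs d"
    define \<Theta> where "\<Theta> = (\<lambda>k. (\<Sum>j\<in>{1..<t}. G j k) + G (t - 1) k)"
    have "dot d \<Theta> w = (\<Sum>j\<in>{1..<t}. gval d n x y w (pp j)) + gval d n x y w (pp (t - 1))" for w
      by (simp add: \<Theta>_def G_def dot_add_left dot_sum_left gval_eq_dot_ATr)
    then have "\<eta> * (dot d \<Theta> v - qnorm_reg q d v / \<eta>) \<le> \<eta> * (dot d \<Theta> (ww t) - qnorm_reg q d (ww t) / \<eta>)"
      using w_opt[OF t v, folded qnorm_reg_def] \<eta> by (simp add: sum_negf algebra_simps)
    then show "dot d \<Theta> v - qnorm_reg q d v / \<eta> \<le> dot d \<Theta> (ww t) - qnorm_reg q d (ww t) / \<eta>"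
      using \<eta> by simp
  qed
  also have "\<dots> \<le> (\<Sum>t\<in>{1..T}. dot n (pp t) (Aw d x y (ww t)) + \<eta> / 2 * (\<Sum>j<n. \<bar>pp t j - pp (t - 1) j\<bar>)\<^sup>2)"
  proof (rule sum_mono)
    fix t
    have "lpnorm p d (\<lambda>k. G t k - G (t - 1) k) \<le> (\<Sum>j<n. \<bar>pp t j - pp (t - 1) j\<bar>)"
      using lpnorm_ATr_le[where n=n and x=x and y=y and r="\<lambda>j. pp t j - pp (t - 1) j", OF p1 pq rows] by (simp add: G_def ATr_diff)
    then have "(lpnorm p d (\<lambda>k. G t k - G (t - 1) k))\<^sup>2 \<le> (\<Sum>j<n. \<bar>pp t j - pp (t - 1) j\<bar>)\<^sup>2"
      by (simp add: power_mono lpnorm_nonneg)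
    then show "dot d (G t) (ww t) + \<eta> / 2 * (lpnorm p d (\<lambda>k. G t k - G (t - 1) k))\<^sup>2
        \<le> dot n (pp t) (Aw d x y (ww t)) + \<eta> / 2 * (\<Sum>j<n. \<bar>pp t j - pp (t - 1) j\<bar>)\<^sup>2"
      using \<eta> by (simp add: G_def gval_eq_dot_Aw flip: gval_eq_dot_ATr)
  qed
  also have "\<dots> \<le> (\<Sum>t\<in>{1..T}. Aw d x y (ww t) i) + \<eta> * ln n"
    using p_opt by (intro entropic_ftrl_regret[where P=pp, OF \<eta> i pp0]) (simp add: gval_eq_dot_Aw)
  finally show ?thesis by (simp add: G_def flip: gval_eq_dot_ATr)
qed

lemma average_margin_nonneg:
  assumes wstar: "lpnorm q d wstar \<le> 1" and \<gamma>: "0 < \<gamma>"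
    and margin: "\<And>i. i < n \<Longrightarrow> \<gamma> \<le> Aw d x y wstar i"
    and T: "sqrt (2 * (p - 1) * ln n) / \<gamma> \<le> T" and i: "i < n"
  shows "0 \<le> Aw d x y (\<lambda>k. 1 / real T * (\<Sum>s\<in>{1..T}. ww s k)) i"
proof -
  have q: "q > 1" using conjugate_exponents[of p q] p pq by auto
  text \<open>Compare with the max-margin vector scaled by the \<open>c\<close> that optimises the bound.\<close>
  define c where "c = (q - 1) * \<eta> * T * \<gamma>"
  have c: "c \<ge> 0" using q \<eta> \<gamma> by (simp add: c_def)
  have "T * (c * \<gamma>) \<le> (\<Sum>t\<in>{1..T}. gval d n x y (\<lambda>k. c * wstar k) (pp t))"
  proof -
    have "c * \<gamma> \<le> gval d n x y (\<lambda>k. c * wstar k) (pp t)" if "t \<in> {1..T}" for t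
      using gval_ge_margin[OF conjunct1[OF p_opt[OF that]] margin] c
      by (simp add: gval_cmult mult_left_mono)
    then show ?thesis using sum_mono[of "{1..T}" "\<lambda>_. c * \<gamma>"] by simp
  qed
  moreover have "qnorm_reg q d (\<lambda>k. c * wstar k) / \<eta> \<le> c\<^sup>2 / (2 * (q - 1) * \<eta>)"
  proof -
    have "(lpnorm q d (\<lambda>k. c * wstar k))\<^sup>2 \<le> c\<^sup>2"
      using lpnorm_cmult[of q d c wstar] q c wstar lpnorm_nonneg[of q d wstar]
      by (simp add: power_mult_distrib mult_left_le power_le_one)
    then show ?thesis
      using q \<eta> by (simp add: qnorm_reg_def divide_right_mono)
  qed
  moreover have "\<eta> * ln n \<le> T * (c * \<gamma>) - c\<^sup>2 / (2 * (q - 1) * \<eta>)"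
    using scaled_comparator_gain[OF _ \<eta> time_bound_conjugate[OF _ pq \<gamma> T]] p q
    by (simp add: c_def mult.assoc)
  ultimately have "0 \<le> (\<Sum>t\<in>{1..T}. Aw d x y (ww t) i)"
    using game_regret[OF i, of "\<lambda>k. c * wstar k"] by linarith
  then show ?thesis unfolding Aw_scaled_sum by simp
qed

end

theorem theorem7:
  "\<exists>C>0. \<forall>(p::real) (q::real) (d::nat) (n::nat) (x::nat \<Rightarrow> nat \<Rightarrow> real) (y::nat \<Rightarrow> real)
      (wstar::nat \<Rightarrow> real) (\<gamma>::real) (ww::nat \<Rightarrow> nat \<Rightarrow> real) (pp::nat \<Rightarrow> nat \<Rightarrow> real) (T::nat).
     2 \<le> p \<longrightarrow> 1 < q \<longrightarrow> q \<le> 2 \<longrightarrow> 1 / p + 1 / q = 1 \<longrightarrow>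
     2 \<le> n \<longrightarrow>
     (\<forall>i<n. x i \<in> vecs d \<and> lpnorm p d (x i) \<le> 1 \<and> y i \<in> {-1, 1}) \<longrightarrow>
     wstar \<in> vecs d \<longrightarrow> lpnorm q d wstar \<le> 1 \<longrightarrow> 0 < \<gamma> \<longrightarrow>
     (\<forall>i<n. \<gamma> \<le> Aw d x y wstar i) \<longrightarrow>
     pp 0 = (\<lambda>i. if i < n then 1 / real n else 0) \<longrightarrow>
     (let \<eta>w = sqrt (1 / (2 * (q - 1) * ln (real n))); \<eta>p = 1 / \<eta>w in
       (\<forall>t\<in>{1..T}.
          ww t \<in> vecs d \<and>
          (\<forall>w\<in>vecs d.
             \<eta>w * ((\<Sum>j\<in>{1..<t}. - gval d n x y w (pp j)) + (- gval d n x y w (pp (t - 1))))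
               + 1 / (2 * (q - 1)) * (lpnorm q d w)\<^sup>2
             \<ge> \<eta>w * ((\<Sum>j\<in>{1..<t}. - gval d n x y (ww t) (pp j)) + (- gval d n x y (ww t) (pp (t - 1))))
               + 1 / (2 * (q - 1)) * (lpnorm q d (ww t))\<^sup>2) \<and>
          pp t \<in> simplex n \<and>
          (\<forall>r\<in>simplex n.
             \<eta>p * (\<Sum>s\<in>{1..t}. gval d n x y (ww s) r) + KL n r (pp 0)
             \<ge> \<eta>p * (\<Sum>s\<in>{1..t}. gval d n x y (ww s) (pp t)) + KL n (pp t) (pp 0)))) \<longrightarrow>
     real T \<ge> C * sqrt (2 * (p - 1) * ln (real n)) / \<gamma> \<longrightarrow>
     (\<forall>i<n. 0 \<le> Aw d x y (\<lambda>k. (1 / real T) * (\<Sum>s\<in>{1..T}. ww s k)) i)"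
  unfolding Let_def
  apply (intro exI[of _ 1] conjI allI impI zero_less_one)
  subgoal premises prems for p q d n x y wstar \<gamma> ww pp T i
  proof (rule average_margin_nonneg[where \<eta> = "sqrt (1 / (2 * (q - 1) * ln n))"])
    show "sqrt (1 / (2 * (q - 1) * ln n)) > 0" using prems(2,5) by simp
    show "pp 0 = uniform n" using prems(11) by (simp add: uniform_def)
    show "sqrt (2 * (p - 1) * ln n) / \<gamma> \<le> T" using prems(13) by simp
  qed (use prems in blast)+
  done

end
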